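(* Let $V\in\mathbb{C}^{N\times N}$ be unitary and $b\in\mathbb{C}^N$ nonzero. Define, in exact arithmetic, the unitary Arnoldi process: $q_1=b/\|b\|_2$, $q_0=0$, $u_{01}=0$, and for $k=1,2,\dots,n$: $$v_k=Vq_k,\qquad u_{k-1,k}=-\frac{q_{k-1}^*v_k}{q_{k-1}^*v_{k-1}}\ (k>1),\qquad l_{kk}=q_k^*v_k+u_{k-1,k}\,q_k^*v_{k-1},$$ $$\tilde q_{k+1}=v_k-l_{kk}q_k+u_{k-1,k}v_{k-1},\qquad l_{k+1,k}=\|\tilde q_{k+1}\|_2,\qquad q_{k+1}=\tilde q_{k+1}/l_{k+1,k}$$ (with $v_0=0$). Assume that for $k=1,\dots,n$ no breakdown occurs, i.e. $l_{k+1,k}\neq0$ and $q_{k-1}^*v_{k-1}\neq0$ for $k>1$. Then for each $k\le n$: the vectors $q_1,\dots,q_{k+1}$ are orthonormal and $q_1,\dots,q_k$ span the Krylov subspace $\mathrm{span}\{b,Vb,\dots,V^{k-1}b\}$; with $Q_k=[q_1,\dots,q_k]$, $L_k$ the $k\times k$ lower bidiagonal matrix with diagonal entries $l_{jj}$ and subdiagonal entries $l_{j+1,j}$, $U_k$ the $k\times k$ upper bidiagonal matrix with unit diagonal and superdiagonal entries $u_{j-1,j}$, and $\hat L_k$ the $(k+1)\times k$ matrix obtained by appending the row $l_{k+1,k}e_k^T$ to $L_k$, one has $$VQ_kU_k=Q_kL_k+l_{k+1,k}q_{k+1}e_k^T=Q_{k+1}\hat L_k,$$ and the matrix $\hat L_kU_k^{-1}$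 has orthonormal columns.
   Context: $e_k$ denotes the $k$-th standard unit vector. All computations are in exact arithmetic. *)

theory Defs
  imports "Jordan_Normal_Form.Schur_Decomposition" "Jordan_Normal_Form.VS_Connect"
begin

text \<open>Conventions (JNF, 0-based indices internally).
  For complex vectors, \<open>w \<bullet>c x = \<Sum>i. w$i * cnj (x$i)\<close>, i.e. \<open>w \<bullet>c x = x\<^sup>* w\<close>.\<close>

definition vnorm2 :: "complex vec \<Rightarrow> real" where
  "vnorm2 x = sqrt (\<Sum>i<dim_vec x. (cmod (x $ i))\<^sup>2)"

definition unitary_mat :: "nat \<Rightarrow> complex mat \<Rightarrow> bool" where
  "unitary_mat N V \<longleftrightarrow> V \<in> carrier_mat N N \<and>
     mat_adjoint V * V = 1\<^sub>m N \<and> V * mat_adjoint V = 1\<^sub>m N"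

abbreviation cspan :: "nat \<Rightarrow> complex vec set \<Rightarrow> complex vec set" where
  "cspan N S \<equiv> LinearCombinations.module.span class_ring (module_vec TYPE(complex) N) S"

text \<open>One step of the unitary Arnoldi process at index k, given qp = q_(k-1), qc = q_k.
  ua = u_(k-1,k), la = l_(kk), qta = tilde q_(k+1).  Here v_j = V q_j, and v_0 = V q_0 = 0.\<close>
definition ua :: "complex mat \<Rightarrow> nat \<Rightarrow> complex vec \<Rightarrow> complex vec \<Rightarrow> complex" where
  "ua V k qp qc = (if k \<le> 1 then 0 else - (((V *\<^sub>v qc) \<bullet>c qp) / ((V *\<^sub>v qp) \<bullet>c qp)))"

definition la :: "complex mat \<Rightarrow> nat \<Rightarrow> complex vec \<Rightarrow> complex vec \<Rightarrow> complex" where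
  "la V k qp qc = (V *\<^sub>v qc) \<bullet>c qc + ua V k qp qc * ((V *\<^sub>v qp) \<bullet>c qc)"

definition qta :: "complex mat \<Rightarrow> nat \<Rightarrow> complex vec \<Rightarrow> complex vec \<Rightarrow> complex vec" where
  "qta V k qp qc = V *\<^sub>v qc - la V k qp qc \<cdot>\<^sub>v qc + ua V k qp qc \<cdot>\<^sub>v (V *\<^sub>v qp)"

fun arn_q :: "complex mat \<Rightarrow> complex vec \<Rightarrow> nat \<Rightarrow> complex vec" where
  "arn_q V b 0 = 0\<^sub>v (dim_vec b)"
| "arn_q V b (Suc 0) = complex_of_real (1 / vnorm2 b) \<cdot>\<^sub>v b"
| "arn_q V b (Suc (Suc k)) =
     (let qt = qta V (Suc k) (arn_q V b k) (arn_q V b (Suc k))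
      in complex_of_real (1 / vnorm2 qt) \<cdot>\<^sub>v qt)"

definition arn_v :: "complex mat \<Rightarrow> complex vec \<Rightarrow> nat \<Rightarrow> complex vec" where
  "arn_v V b j = V *\<^sub>v arn_q V b j"

definition arn_u :: "complex mat \<Rightarrow> complex vec \<Rightarrow> nat \<Rightarrow> complex" where
  "arn_u V b j = ua V j (arn_q V b (j - 1)) (arn_q V b j)"

definition arn_l :: "complex mat \<Rightarrow> complex vec \<Rightarrow> nat \<Rightarrow> complex" where
  "arn_l V b j = la V j (arn_q V b (j - 1)) (arn_q V b j)"

definition arn_ls :: "complex mat \<Rightarrow> complex vec \<Rightarrow> nat \<Rightarrow> real" where
  "arn_ls V b j = vnorm2 (qta V j (arn_q V b (j - 1)) (arn_q V b j))"

definition arn_Q :: "nat \<Rightarrow> complex mat \<Rightarrow> complex vec \<Rightarrow> nat \<Rightarrow> complex mat" where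
  "arn_Q N V b k = mat_of_cols N (map (arn_q V b) [1..<k+1])"

definition arn_L :: "complex mat \<Rightarrow> complex vec \<Rightarrow> nat \<Rightarrow> complex mat" where
  "arn_L V b k = mat k k (\<lambda>(i, j). if i = j then arn_l V b (j + 1)
                    else if i = j + 1 then complex_of_real (arn_ls V b (j + 1)) else 0)"

definition arn_Lhat :: "complex mat \<Rightarrow> complex vec \<Rightarrow> nat \<Rightarrow> complex mat" where
  "arn_Lhat V b k = mat (k + 1) k (\<lambda>(i, j). if i = j then arn_l V b (j + 1)
                    else if i = j + 1 then complex_of_real (arn_ls V b (j + 1)) else 0)"

definition arn_U :: "complex mat \<Rightarrow> complex vec \<Rightarrow> nat \<Rightarrow> complex mat" where
  "arn_U V b k = mat k k (\<lambda>(i, j). if i = j then 1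
                    else if j = i + 1 then arn_u V b (j + 1) else 0)"

end

theory Submission
  imports Defs
begin

(* Write w_k = q_k + u_{k-1,k} q_{k-1}, the k-th column of Q_k U_k, and <x, y> = y^* x.
  Unwinding the definitions, the process is the three-term recurrence
  V w_k = l_kk q_k + l_{k+1,k} q_{k+1}, whose instances for the columns 1..k make up
  V Q_k U_k = Q_{k+1} Lhat_k; splitting off the last row of Lhat_k gives the middle identity.

  The coefficients l_kk and u_{k-1,k} are chosen
  so that V w_k has component l_kk along q_k and none along q_{k-1}. For the earlier q_i one
  uses that, V being unitary, each q_i differs from a multiple of q_1 by an element of
  V span{q_1, ..., q_{i-1}}: for x orthogonal to q_1, ..., q_{i-1} one has
  <Vx, q_i> = d_i <Vx, q_1>. Since w_k is orthogonal to q_1, ..., q_{k-2}, this at i = k-1,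
  where d_{k-1} is nonzero because <V q_{k-1}, q_{k-1}> is, yields <V w_k, q_1> = 0, and
  then <V w_k, q_i> = 0 for every i < k-1.

  Finally Q_{k+1} has
  orthonormal columns and maps the columns of Lhat_k U_k^{-1} to those of V Q_k, which are
  orthonormal because V is unitary; hence so are the columns of Lhat_k U_k^{-1}. *)

declare arn_q.simps [simp del]

lemma cscalar_prod_add_left:
  fixes x y z :: "complex vec"
  assumes "x \<in> carrier_vec n" "y \<in> carrier_vec n" "z \<in> carrier_vec n"
  shows "(x + y) \<bullet>c z = x \<bullet>c z + y \<bullet>c z"
  using assms by (intro add_scalar_prod_distrib) auto

lemma cscalar_prod_add_right:
  fixes x y z :: "complex vec"
  assumes "x \<in> carrier_vec n" "y \<in> carrier_vec n" "z \<in> carrier_vec n"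
  shows "x \<bullet>c (y + z) = x \<bullet>c y + x \<bullet>c z"
  using assms by (simp add: conjugate_add_vec[of _ n] scalar_prod_add_distrib[of _ n])

lemma cscalar_prod_smult_right:
  fixes x z :: "complex vec"
  assumes "x \<in> carrier_vec n" "z \<in> carrier_vec n"
  shows "x \<bullet>c (c \<cdot>\<^sub>v z) = cnj c * (x \<bullet>c z)"
  using assms by (simp add: conjugate_smult_vec)

lemma cscalar_prod_swap:
  fixes x z :: "complex vec"
  assumes "x \<in> carrier_vec n" "z \<in> carrier_vec n"
  shows "x \<bullet>c z = cnj (z \<bullet>c x)"
  using assms by (simp add: scalar_prod_def sum_conjugate mult.commute)

lemma cscalar_prod_self_eq_vnorm2:
  fixes x :: "complex vec"
  shows "x \<bullet>c x = complex_of_real ((vnorm2 x)\<^sup>2)"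
proof -
  have "x \<bullet>c x = (\<Sum>i<dim_vec x. complex_of_real ((cmod (x $ i))\<^sup>2))"
    by (simp add: scalar_prod_def atLeast0LessThan complex_norm_square del: of_real_power)
  also have "\<dots> = complex_of_real ((vnorm2 x)\<^sup>2)"
    unfolding vnorm2_def by (simp add: sum_nonneg del: of_real_power)
  finally show ?thesis .
qed

lemma vnorm2_eq_0_iff:
  fixes x :: "complex vec"
  assumes "x \<in> carrier_vec n"
  shows "vnorm2 x = 0 \<longleftrightarrow> x = 0\<^sub>v n"
  using cscalar_prod_self_eq_vnorm2[of x] conjugate_square_eq_0_vec[OF assms] by auto

lemma cscalar_prod_normalize_self:
  fixes x :: "complex vec"
  assumes "vnorm2 x \<noteq> 0"
  shows "(complex_of_real (1 / vnorm2 x) \<cdot>\<^sub>v x) \<bullet>c (complex_of_real (1 / vnorm2 x) \<cdot>\<^sub>v x) = 1"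
  using assms cscalar_prod_self_eq_vnorm2[of x]
  by (simp add: cscalar_prod_smult_right[of _ "dim_vec x"] power2_eq_square)

lemma mat_adjoint_carrier: "A \<in> carrier_mat m n \<Longrightarrow> mat_adjoint A \<in> carrier_mat n m"
  unfolding mat_adjoint_def by auto

lemma mat_adjoint_index:
  "A \<in> carrier_mat m n \<Longrightarrow> i < n \<Longrightarrow> j < m \<Longrightarrow> mat_adjoint A $$ (i, j) = conjugate (A $$ (j, i))"
  unfolding mat_adjoint_def by (auto simp: mat_of_rows_index)

lemma mat_adjoint_mult_index:
  fixes A B :: "'a :: conjugatable_field mat"
  assumes "A \<in> carrier_mat m n" "B \<in> carrier_mat m p" "i < n" "j < p"
  shows "(mat_adjoint A * B) $$ (i, j) = col B j \<bullet>c col A i"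
  using assms unfolding mat_adjoint_def
  by (simp add: conjugate_vec_sprod_comm[of _ m])

lemma mat_adjoint_mult_self_eq_oneI:
  fixes A :: "'a :: conjugatable_field mat"
  assumes A: "A \<in> carrier_mat m n"
    and orthonormal: "\<And>i j. i < n \<Longrightarrow> j < n \<Longrightarrow> col A j \<bullet>c col A i = (if i = j then 1 else 0)"
  shows "mat_adjoint A * A = 1\<^sub>m n"
proof (rule eq_matI)
  fix i j assume "i < dim_row (1\<^sub>m n :: 'a mat)" "j < dim_col (1\<^sub>m n :: 'a mat)"
  then show "(mat_adjoint A * A) $$ (i, j) = 1\<^sub>m n $$ (i, j)"
    by (simp add: mat_adjoint_mult_index[OF A A] orthonormal)
qed (use A mat_adjoint_carrier[OF A] in auto)

lemma mult_mat_vec_cscalar_prod: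
  fixes A :: "complex mat"
  assumes A: "A \<in> carrier_mat m n" and x: "x \<in> carrier_vec n" and y: "y \<in> carrier_vec m"
  shows "(A *\<^sub>v x) \<bullet>c y = x \<bullet>c (mat_adjoint A *\<^sub>v y)"
proof -
  have "(A *\<^sub>v x) \<bullet>c y = (\<Sum>i<m. \<Sum>j<n. A $$ (i, j) * x $ j * cnj (y $ i))"
    using A x y by (auto simp: scalar_prod_def row_def atLeast0LessThan sum_distrib_right intro!: sum.cong)
  also have "\<dots> = (\<Sum>j<n. \<Sum>i<m. A $$ (i, j) * x $ j * cnj (y $ i))"
    by (rule sum.swap)
  also have "\<dots> = x \<bullet>c (mat_adjoint A *\<^sub>v y)"
    using A x y mat_adjoint_carrier[OF A]
    by (auto simp: scalar_prod_def row_def atLeast0LessThan mat_adjoint_index sum_distrib_left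
        mult_ac intro!: sum.cong)
  finally show ?thesis .
qed

lemma isometry_cscalar_prod:
  fixes A :: "complex mat"
  assumes A: "A \<in> carrier_mat m n" and AA: "mat_adjoint A * A = 1\<^sub>m n"
    and x: "x \<in> carrier_vec n" and y: "y \<in> carrier_vec n"
  shows "(A *\<^sub>v x) \<bullet>c (A *\<^sub>v y) = x \<bullet>c y"
proof -
  have "mat_adjoint A *\<^sub>v (A *\<^sub>v y) = y"
    using assoc_mult_mat_vec[OF mat_adjoint_carrier[OF A] A y] AA y by simp
  then show ?thesis
    using mult_mat_vec_cscalar_prod[OF A x] A y by simp
qed

lemma mult_mat_zero_vec: "A \<in> carrier_mat m n \<Longrightarrow> A *\<^sub>v 0\<^sub>v n = 0\<^sub>v m"
  by (intro eq_vecI) auto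

lemma (in vec_space) mult_mat_vec_in_span:
  assumes A: "A \<in> carrier_mat n n" and S: "S \<subseteq> carrier_vec n" and T: "T \<subseteq> carrier_vec n"
    and image: "\<And>s. s \<in> S \<Longrightarrow> A *\<^sub>v s \<in> span T"
    and y: "y \<in> span S"
  shows "A *\<^sub>v y \<in> span T"
proof -
  let ?M = "{y \<in> carrier_vec n. A *\<^sub>v y \<in> span T}"
  have "submodule class_ring ?M V"
  proof (rule submodule.intro)
    show "Module.module class_ring V" by (rule vec_module)
    show "?M \<subseteq> carrier V" by auto
    show "\<zero>\<^bsub>V\<^esub> \<in> ?M" using mult_mat_zero_vec[OF A] span_zero by auto
    show "v \<oplus>\<^bsub>V\<^esub> w \<in> ?M" if "v \<in> ?M" "w \<in> ?M" for v w
      using that A T by (auto simp: mult_add_distrib_mat_vec intro: span_add1)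
    show "c \<odot>\<^bsub>V\<^esub> v \<in> ?M" if "v \<in> ?M" for c v
      using that A T by (auto simp: mult_mat_vec intro: smult_in_span)
  qed
  then have "span S \<subseteq> ?M" using S image by (intro span_is_subset) auto
  then show ?thesis using y by auto
qed

lemma index_mult_mat_sum:
  "A \<in> carrier_mat m p \<Longrightarrow> B \<in> carrier_mat p r \<Longrightarrow> i < m \<Longrightarrow> j < r \<Longrightarrow>
    (A * B) $$ (i, j) = (\<Sum>t<p. A $$ (i, t) * B $$ (t, j))"
  by (auto simp: scalar_prod_def atLeast0LessThan intro!: sum.cong)

lemma outer_product_index:
  "i < m \<Longrightarrow> j < n \<Longrightarrow> x \<in> carrier_vec m \<Longrightarrow> y \<in> carrier_vec n \<Longrightarrow>
    (mat_of_cols m [x] * mat_of_rows n [y]) $$ (i, j) = x $ i * y $ j"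
  by (simp add: mat_of_cols_index mat_of_rows_index scalar_prod_def)

lemma sum_mult_lower_bidiagonal:
  fixes g :: "nat \<Rightarrow> 'a :: comm_semiring_0"
  assumes "c < K"
  shows "(\<Sum>t<K. g t * (if t = c then a else if t = c + 1 then a' else 0))
    = g c * a + (if c + 1 < K then g (c + 1) * a' else 0)"
proof -
  have "(\<Sum>t<K. g t * (if t = c then a else if t = c + 1 then a' else 0))
     = (\<Sum>t<K. (if t = c then g c * a else 0) + (if t = c + 1 then g (c + 1) * a' else 0))"
    by (intro sum.cong) auto
  then show ?thesis using assms by (simp add: sum.distrib)
qed

lemma sum_mult_upper_bidiagonal:
  fixes g :: "nat \<Rightarrow> 'a :: comm_semiring_1"
  assumes "c < K"
  shows "(\<Sum>t<K. g t * (if t = c then 1 else if c = t + 1 then a else 0))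
    = g c + (if 0 < c then a * g (c - 1) else 0)"
proof -
  have "(\<Sum>t<K. g t * (if t = c then 1 else if c = t + 1 then a else 0))
     = (\<Sum>t<K. (if t = c then g c else 0) + (if 0 < c \<and> t = c - 1 then a * g (c - 1) else 0))"
    by (intro sum.cong) (auto simp: mult.commute)
  then show ?thesis using assms by (auto simp: sum.distrib)
qed

lemma qta_eq:
  assumes "V \<in> carrier_mat N N" "qp \<in> carrier_vec N" "qc \<in> carrier_vec N"
  shows "qta V k qp qc = V *\<^sub>v (qc + ua V k qp qc \<cdot>\<^sub>v qp) + (- la V k qp qc) \<cdot>\<^sub>v qc"
  using assms
  by (intro eq_vecI) (auto simp: qta_def mult_add_distrib_mat_vec[of V N N] mult_mat_vec)

lemma arn_q_carrier:
  "V \<in> carrier_mat N N \<Longrightarrow> b \<in> carrier_vec N \<Longrightarrow> arn_q V b j \<in> carrier_vec N"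
  by (induction V b j rule: arn_q.induct) (auto simp: arn_q.simps qta_def Let_def)

lemma arn_Q_carrier: "arn_Q N V b k \<in> carrier_mat N k"
  unfolding arn_Q_def by (metis length_map length_upt add_diff_cancel_right' mat_of_cols_carrier(1))

lemma arn_Q_index: "r < N \<Longrightarrow> c < k \<Longrightarrow> arn_Q N V b k $$ (r, c) = arn_q V b (Suc c) $ r"
  unfolding arn_Q_def by (simp add: mat_of_cols_index del: upt_Suc)

lemma col_arn_Q:
  "c < k \<Longrightarrow> arn_q V b (Suc c) \<in> carrier_vec N \<Longrightarrow> col (arn_Q N V b k) c = arn_q V b (Suc c)"
  unfolding arn_Q_def by (subst col_mat_of_cols) (auto simp del: upt_Suc)

lemma arn_L_carrier: "arn_L V b k \<in> carrier_mat k k"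
  unfolding arn_L_def by auto

lemma arn_Lhat_carrier: "arn_Lhat V b k \<in> carrier_mat (k + 1) k"
  unfolding arn_Lhat_def by auto

lemma arn_U_carrier: "arn_U V b k \<in> carrier_mat k k"
  unfolding arn_U_def by auto

lemma det_arn_U: "det (arn_U V b k) = 1"
proof -
  have "upper_triangular (arn_U V b k)"
    unfolding upper_triangular_def arn_U_def by auto
  then have "det (arn_U V b k) = prod_list (diag_mat (arn_U V b k))"
    using det_upper_triangular arn_U_carrier by blast
  also have "diag_mat (arn_U V b k) = map (\<lambda>_. 1) [0..<k]"
    unfolding diag_mat_def arn_U_def by (intro map_cong) auto
  finally show ?thesis by (simp add: map_replicate_const)
qed

lemma arn_U_invertible: "invertible_mat (arn_U V b k)"
proof -
  from det_non_zero_imp_unit[OF arn_U_carrier, of V b k "()"] det_arn_U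
  obtain W where "W \<in> carrier_mat k k" "arn_U V b k * W = 1\<^sub>m k" "W * arn_U V b k = 1\<^sub>m k"
    unfolding Units_def ring_mat_def by auto
  with arn_U_carrier[of V b k] show ?thesis
    unfolding invertible_mat_def inverts_mat_def by auto
qed

lemma arn_Q_mult_L_plus_last_column:
  assumes k: "1 \<le> k" and q_carrier: "\<And>j. arn_q V b j \<in> carrier_vec N"
  shows "arn_Q N V b k * arn_L V b k
         + complex_of_real (arn_ls V b k) \<cdot>\<^sub>m
             (mat_of_cols N [arn_q V b (k + 1)] * mat_of_rows k [unit_vec k (k - 1)])
       = arn_Q N V b (k + 1) * arn_Lhat V b k"
    (is "?QL + ?E = ?QLhat")
proof (rule eq_matI)
  fix r c assume "r < dim_row ?QLhat" "c < dim_col ?QLhat"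
  then have r: "r < N" and c: "c < k"
    using arn_Q_carrier arn_Lhat_carrier by (metis carrier_matD index_mult_mat(2,3))+
  let ?q = "\<lambda>t. arn_q V b (Suc t) $ r" and ?l = "arn_l V b (c + 1)"
    and ?s = "complex_of_real (arn_ls V b (c + 1))"
  have QL: "?QL $$ (r, c) = ?q c * ?l + (if c + 1 < k then ?q (c + 1) * ?s else 0)"
    using index_mult_mat_sum[OF arn_Q_carrier arn_L_carrier r c] r c
    by (simp add: arn_Q_index arn_L_def sum_mult_lower_bidiagonal)
  have E: "?E $$ (r, c) = complex_of_real (arn_ls V b k) * (if c = k - 1 then ?q k else 0)"
    using outer_product_index[OF r c q_carrier, of "unit_vec k (k - 1)"] r c k
    by (simp del: index_mult_mat(1))
  have QLhat: "?QLhat $$ (r, c) = ?q c * ?l + ?q (c + 1) * ?s"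
    using index_mult_mat_sum[OF arn_Q_carrier arn_Lhat_carrier r c] r c
    by (simp add: arn_Q_index arn_Lhat_def sum_mult_lower_bidiagonal del: sum.lessThan_Suc)
  have "(?QL + ?E) $$ (r, c) = ?QL $$ (r, c) + ?E $$ (r, c)"
    using r c arn_Q_carrier[of N V b k] arn_L_carrier[of V b k] by simp
  then show "(?QL + ?E) $$ (r, c) = ?QLhat $$ (r, c)"
    unfolding QL E QLhat using c k by (cases "c + 1 < k") (auto simp: mult.commute)
qed (use arn_Q_carrier[of N V b k] arn_Q_carrier[of N V b "k + 1"] arn_L_carrier[of V b k]
      arn_Lhat_carrier[of V b k] in auto)

section \<open>Orthonormality of the Arnoldi vectors\<close>

locale unitary_arnoldi =
  fixes N n :: nat and V :: "complex mat" and b :: "complex vec"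
  assumes unitary: "unitary_mat N V"
    and b: "b \<in> carrier_vec N" and b_nonzero: "b \<noteq> 0\<^sub>v N"
    and no_breakdown: "\<And>k. 1 \<le> k \<Longrightarrow> k \<le> n \<Longrightarrow>
        arn_ls V b k \<noteq> 0 \<and>
        (k > 1 \<longrightarrow> arn_v V b (k - 1) \<bullet>c arn_q V b (k - 1) \<noteq> 0)"
begin

sublocale cvec: vec_space "TYPE(complex)" N .

abbreviation "q \<equiv> arn_q V b"
abbreviation "l \<equiv> arn_l V b"
abbreviation "s \<equiv> arn_ls V b"
abbreviation "u \<equiv> arn_u V b"

definition w :: "nat \<Rightarrow> complex vec" where
  "w j = q j + u j \<cdot>\<^sub>v q (j - 1)"

lemma V_carrier: "V \<in> carrier_mat N N"
  using unitary unfolding unitary_mat_def by auto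

lemma V_isometry: "x \<in> carrier_vec N \<Longrightarrow> y \<in> carrier_vec N \<Longrightarrow> (V *\<^sub>v x) \<bullet>c (V *\<^sub>v y) = x \<bullet>c y"
  using unitary isometry_cscalar_prod[OF V_carrier] unfolding unitary_mat_def by blast

lemma q_carrier [simp]: "q j \<in> carrier_vec N"
  using arn_q_carrier[OF V_carrier b] .

lemma dim_q [simp]: "dim_vec (q j) = N"
  using q_carrier[of j] carrier_vecD by blast

lemma w_carrier [simp]: "w j \<in> carrier_vec N"
  unfolding w_def by simp

lemma V_w_index: "r < N \<Longrightarrow> (V *\<^sub>v w j) $ r = (V *\<^sub>v q j) $ r + u j * (V *\<^sub>v q (j - 1)) $ r"
  using V_carrier by (simp add: w_def mult_add_distrib_mat_vec[of V N N] mult_mat_vec)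

lemma q_0: "q 0 = 0\<^sub>v N"
  using b by (simp add: arn_q.simps)

lemma q_1: "q 1 = complex_of_real (1 / vnorm2 b) \<cdot>\<^sub>v b"
  by (simp add: arn_q.simps)

lemma u_1: "u 1 = 0"
  by (simp add: arn_u_def ua_def)

lemma u_eq: "1 < k \<Longrightarrow> u k = - ((V *\<^sub>v q k) \<bullet>c q (k - 1)) / ((V *\<^sub>v q (k - 1)) \<bullet>c q (k - 1))"
  by (simp add: arn_u_def ua_def)

lemma l_eq: "l k = (V *\<^sub>v q k) \<bullet>c q k + u k * ((V *\<^sub>v q (k - 1)) \<bullet>c q k)"
  by (simp add: arn_l_def la_def arn_u_def)

lemma s_nonzero: "1 \<le> j \<Longrightarrow> j \<le> n \<Longrightarrow> s j \<noteq> 0"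
  using no_breakdown by blast

lemma V_q_cscalar_prod_q_nonzero: "1 \<le> j \<Longrightarrow> j < n \<Longrightarrow> (V *\<^sub>v q j) \<bullet>c q j \<noteq> 0"
  using no_breakdown[of "j + 1"] by (simp add: arn_v_def)

lemma q_Suc_eq: "1 \<le> j \<Longrightarrow> q (Suc j) = complex_of_real (1 / s j) \<cdot>\<^sub>v (V *\<^sub>v w j + (- l j) \<cdot>\<^sub>v q j)"
  by (cases j) (simp_all add: arn_q.simps qta_eq[OF V_carrier] w_def arn_ls_def arn_l_def arn_u_def Let_def)

lemma arnoldi_recurrence:
  assumes "1 \<le> j" "j \<le> n"
  shows "V *\<^sub>v w j = l j \<cdot>\<^sub>v q j + complex_of_real (s j) \<cdot>\<^sub>v q (Suc j)"
proof (rule eq_vecI)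
  fix r assume "r < dim_vec (l j \<cdot>\<^sub>v q j + complex_of_real (s j) \<cdot>\<^sub>v q (Suc j))"
  then have r: "r < N" by simp
  have "q (Suc j) $ r = ((V *\<^sub>v w j) $ r - l j * q j $ r) / complex_of_real (s j)"
    using q_Suc_eq[OF assms(1)] r V_carrier by simp
  then show "(V *\<^sub>v w j) $ r = (l j \<cdot>\<^sub>v q j + complex_of_real (s j) \<cdot>\<^sub>v q (Suc j)) $ r"
    using r s_nonzero[OF assms] by (simp add: field_simps)
qed (use V_carrier in simp)

lemma q_1_unit: "q 1 \<bullet>c q 1 = 1"
  unfolding q_1 using cscalar_prod_normalize_self vnorm2_eq_0_iff[OF b] b_nonzero by simp

lemma q_Suc_unit:
  assumes "1 \<le> j" "j \<le> n"
  shows "q (Suc j) \<bullet>c q (Suc j) = 1"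
proof -
  obtain j' where j: "j = Suc j'" using assms(1) by (cases j) auto
  let ?qt = "qta V j (q (j - 1)) (q j)"
  have q_Suc: "q (Suc j) = complex_of_real (1 / vnorm2 ?qt) \<cdot>\<^sub>v ?qt"
    by (simp add: j Let_def arn_q.simps)
  have "vnorm2 ?qt \<noteq> 0"
    using s_nonzero[OF assms] by (simp add: arn_ls_def)
  then show ?thesis
    unfolding q_Suc by (rule cscalar_prod_normalize_self)
qed

lemma cscalar_prod_w:
  assumes "x \<in> carrier_vec N"
  shows "x \<bullet>c w j = x \<bullet>c q j + cnj (u j) * (x \<bullet>c q (j - 1))"
  using assms by (simp add: w_def cscalar_prod_add_right[of _ N] cscalar_prod_smult_right[of _ N])

lemma w_cscalar_prod:
  assumes "y \<in> carrier_vec N"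
  shows "w j \<bullet>c y = q j \<bullet>c y + u j * (q (j - 1) \<bullet>c y)"
  using assms by (simp add: w_def cscalar_prod_add_left[of _ N])

lemma V_w_cscalar_prod:
  assumes "y \<in> carrier_vec N"
  shows "(V *\<^sub>v w j) \<bullet>c y = (V *\<^sub>v q j) \<bullet>c y + u j * ((V *\<^sub>v q (j - 1)) \<bullet>c y)"
  using assms V_carrier
  by (simp add: w_def mult_add_distrib_mat_vec[of V N N] mult_mat_vec cscalar_prod_add_left[of _ N])

(* That is, q_i - cnj d q_1 lies in V span{q_1, ..., q_{i-1}}. *)
lemma V_cscalar_prod_q_proportional:
  assumes "1 \<le> i" "i \<le> n + 1"
  shows "\<exists>d. \<forall>x \<in> carrier_vec N. (\<forall>j \<in> {1..<i}. x \<bullet>c q j = 0) \<longrightarrow>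
           (V *\<^sub>v x) \<bullet>c q i = d * ((V *\<^sub>v x) \<bullet>c q 1)"
  using assms(1)
proof (induction i rule: dec_induct)
  case base
  show ?case by (intro exI[of _ 1]) simp
next
  case (step m)
  then have m: "1 \<le> m" "m \<le> n" using assms(2) by auto
  from step.IH obtain d where d: "\<forall>x \<in> carrier_vec N. (\<forall>j \<in> {1..<m}. x \<bullet>c q j = 0) \<longrightarrow>
      (V *\<^sub>v x) \<bullet>c q m = d * ((V *\<^sub>v x) \<bullet>c q 1)"
    by blast
  show ?case
  proof (intro exI ballI impI)
    fix x assume x: "x \<in> carrier_vec N" and orth: "\<forall>j \<in> {1..<Suc m}. x \<bullet>c q j = 0"
    have Vx: "V *\<^sub>v x \<in> carrier_vec N" using V_carrier x by simp
    have "x \<bullet>c q (m - 1) = 0"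
    proof (cases "m = 1")
      case True
      then show ?thesis using x by (simp add: q_0)
    next
      case False
      then show ?thesis using m by (intro orth[rule_format]) auto
    qed
    then have "x \<bullet>c w m = 0"
      using cscalar_prod_w[OF x, of m] orth m by simp
    then have "0 = (V *\<^sub>v x) \<bullet>c (V *\<^sub>v w m)"
      using V_isometry x by simp
    also have "\<dots> = cnj (l m) * ((V *\<^sub>v x) \<bullet>c q m) + complex_of_real (s m) * ((V *\<^sub>v x) \<bullet>c q (Suc m))"
      using Vx by (simp add: arnoldi_recurrence[OF m] cscalar_prod_add_right[of _ N]
          cscalar_prod_smult_right[of _ N])
    also have "(V *\<^sub>v x) \<bullet>c q m = d * ((V *\<^sub>v x) \<bullet>c q 1)"
      using d x orth by simp
    finally have "complex_of_real (s m) * ((V *\<^sub>v x) \<bullet>c q (Suc m)) = - cnj (l m) * d * ((V *\<^sub>v x) \<bullet>c q 1)"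
      by (simp add: algebra_simps eq_neg_iff_add_eq_0)
    then show "(V *\<^sub>v x) \<bullet>c q (Suc m) = (- cnj (l m) * d / s m) * ((V *\<^sub>v x) \<bullet>c q 1)"
      using s_nonzero[OF m] by (simp add: field_simps)
  qed
qed

lemma V_w_cscalar_prod_q:
  assumes k: "1 \<le> k" "k \<le> n"
    and orth: "\<And>i j. i \<in> {1..k} \<Longrightarrow> j \<in> {1..k} \<Longrightarrow> q i \<bullet>c q j = (if i = j then 1 else 0)"
    and i: "i \<in> {1..k}"
  shows "(V *\<^sub>v w k) \<bullet>c q i = (if i = k then l k else 0)"
proof (cases "i = k")
  case True
  then show ?thesis using V_w_cscalar_prod[of "q k" k] by (simp add: l_eq)
next
  case False
  then have k2: "1 \<le> k - 1" "k - 1 < n" and ik: "i \<le> k - 1" using i k by auto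
  have w_orth: "w k \<bullet>c q j = 0" if "j \<in> {1..<k - 1}" for j
    using that k orth[of k j] orth[of "k - 1" j] w_cscalar_prod[of "q j" k] by auto
  have "(V *\<^sub>v w k) \<bullet>c q (k - 1) = 0"
    using V_w_cscalar_prod[of "q (k - 1)" k] V_q_cscalar_prod_q_nonzero[OF k2] k2
    by (simp add: u_eq)
  moreover obtain d where d: "\<forall>x \<in> carrier_vec N. (\<forall>j \<in> {1..<k - 1}. x \<bullet>c q j = 0) \<longrightarrow>
      (V *\<^sub>v x) \<bullet>c q (k - 1) = d * ((V *\<^sub>v x) \<bullet>c q 1)"
    using V_cscalar_prod_q_proportional[of "k - 1"] k2 by auto
  moreover have "d \<noteq> 0"
  proof
    assume "d = 0"
    moreover have "(V *\<^sub>v q (k - 1)) \<bullet>c q (k - 1) = d * ((V *\<^sub>v q (k - 1)) \<bullet>c q 1)"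
      by (rule d[rule_format]) (use orth[of "k - 1"] k2 in auto)
    ultimately show False using V_q_cscalar_prod_q_nonzero[OF k2] by simp
  qed
  ultimately have "(V *\<^sub>v w k) \<bullet>c q 1 = 0"
    using w_orth by auto
  moreover obtain d' where "\<forall>x \<in> carrier_vec N. (\<forall>j \<in> {1..<i}. x \<bullet>c q j = 0) \<longrightarrow>
      (V *\<^sub>v x) \<bullet>c q i = d' * ((V *\<^sub>v x) \<bullet>c q 1)"
    using V_cscalar_prod_q_proportional[of i] i k by auto
  ultimately show ?thesis
    using w_orth ik False by auto
qed

lemma q_Suc_orthogonal:
  assumes k: "1 \<le> k" "k \<le> n"
    and orth: "\<And>i j. i \<in> {1..k} \<Longrightarrow> j \<in> {1..k} \<Longrightarrow> q i \<bullet>c q j = (if i = j then 1 else 0)"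
    and i: "i \<in> {1..k}"
  shows "q (Suc k) \<bullet>c q i = 0"
proof -
  have "(V *\<^sub>v w k) \<bullet>c q i = l k * (q k \<bullet>c q i) + complex_of_real (s k) * (q (Suc k) \<bullet>c q i)"
    by (simp add: arnoldi_recurrence[OF k] cscalar_prod_add_left[of _ N])
  then show ?thesis
    using V_w_cscalar_prod_q[OF k orth i] orth[OF _ i, of k] k s_nonzero[OF k]
    by (cases "i = k") auto
qed

lemma q_orthonormal_upto:
  "m \<le> n + 1 \<Longrightarrow> i \<in> {1..m} \<Longrightarrow> j \<in> {1..m} \<Longrightarrow> q i \<bullet>c q j = (if i = j then 1 else 0)"
proof (induction m arbitrary: i j)
  case 0
  then show ?case by simp
next
  case (Suc k)
  show ?case
  proof (cases "k = 0")
    case True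
    then show ?thesis using Suc.prems q_1_unit by simp
  next
    case False
    then have k: "1 \<le> k" "k \<le> n" using Suc.prems by auto
    note orth = Suc.IH[OF Suc_leD[OF Suc.prems(1)]]
    have "q i \<bullet>c q (Suc k) = 0" if "i \<in> {1..k}" for i
      using q_Suc_orthogonal[OF k orth that] cscalar_prod_swap[of "q i" N "q (Suc k)"] by simp
    then show ?thesis
      using Suc.prems q_Suc_orthogonal[OF k orth] q_Suc_unit[OF k] orth
      by (cases "i = Suc k"; cases "j = Suc k") auto
  qed
qed

lemma q_orthonormal:
  "i \<in> {1..n + 1} \<Longrightarrow> j \<in> {1..n + 1} \<Longrightarrow> q i \<bullet>c q j = (if i = j then 1 else 0)"
  using q_orthonormal_upto by blast

section \<open>Krylov subspaces\<close>

abbreviation "krylov j \<equiv> ((\<lambda>x. V *\<^sub>v x) ^^ j) b"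

lemma krylov_carrier [simp]: "krylov j \<in> carrier_vec N"
  by (induction j) (use b V_carrier in auto)

lemma V_q_eq:
  assumes "1 \<le> j" "j \<le> n"
  shows "V *\<^sub>v q j = l j \<cdot>\<^sub>v q j + complex_of_real (s j) \<cdot>\<^sub>v q (Suc j) + (- u j) \<cdot>\<^sub>v (V *\<^sub>v q (j - 1))"
proof (rule eq_vecI)
  fix r assume "r < dim_vec (l j \<cdot>\<^sub>v q j + complex_of_real (s j) \<cdot>\<^sub>v q (Suc j) + (- u j) \<cdot>\<^sub>v (V *\<^sub>v q (j - 1)))"
  then have r: "r < N" using V_carrier by simp
  show "(V *\<^sub>v q j) $ r = (l j \<cdot>\<^sub>v q j + complex_of_real (s j) \<cdot>\<^sub>v q (Suc j) + (- u j) \<cdot>\<^sub>v (V *\<^sub>v q (j - 1))) $ r"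
    using V_w_index[OF r, of j] arnoldi_recurrence[OF assms] r V_carrier by (simp add: algebra_simps)
qed (use V_carrier in simp)

lemma V_q_in_span:
  "1 \<le> i \<Longrightarrow> i \<le> n \<Longrightarrow> V *\<^sub>v q i \<in> cspan N (q ` {1..i + 1})"
proof (induction i)
  case 0
  then show ?case by simp
next
  case (Suc i)
  let ?S = "q ` {1..Suc i + 1}"
  have S: "?S \<subseteq> carrier_vec N" by auto
  have "V *\<^sub>v q i \<in> cspan N ?S"
  proof (cases "i = 0")
    case True
    then show ?thesis using mult_mat_zero_vec[OF V_carrier] q_0 cvec.span_zero by simp
  next
    case False
    then have "V *\<^sub>v q i \<in> cspan N (q ` {1..i + 1})" using Suc by simp
    moreover have "cspan N (q ` {1..i + 1}) \<subseteq> cspan N ?S" by (intro cvec.span_is_monotone) auto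
    ultimately show ?thesis by blast
  qed
  moreover have "q (Suc i) \<in> cspan N ?S" "q (Suc (Suc i)) \<in> cspan N ?S"
    using cvec.in_own_span[OF S] by auto
  ultimately show ?case
    unfolding V_q_eq[OF Suc.prems] using S
    by (intro cvec.span_add1 cvec.smult_in_span) simp_all
qed

lemma q_in_span_krylov:
  "i \<le> n + 1 \<Longrightarrow> q ` {..i} \<subseteq> cspan N (krylov ` {0..<i})"
proof (induction i)
  case 0
  then show ?case using cvec.span_zero q_0 by simp
next
  case (Suc i)
  let ?K = "krylov ` {0..<Suc i}"
  have K: "?K \<subseteq> carrier_vec N" by auto
  have "cspan N (krylov ` {0..<i}) \<subseteq> cspan N ?K"
    by (intro cvec.span_is_monotone) auto
  with Suc have IH: "q ` {..i} \<subseteq> cspan N ?K" by simp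
  have "q (Suc i) \<in> cspan N ?K"
  proof (cases "i = 0")
    case True
    have "b \<in> cspan N ?K" using cvec.in_own_span[OF K] True by auto
    then have "q 1 \<in> cspan N ?K" unfolding q_1 using K by (rule cvec.smult_in_span[rotated])
    then show ?thesis using True by simp
  next
    case False
    then have i: "1 \<le> i" "i \<le> n" using Suc.prems by auto
    have w: "w i \<in> cspan N (krylov ` {0..<i})"
      using Suc.IH i unfolding w_def
      by (intro cvec.span_add1 cvec.smult_in_span) auto
    have "V *\<^sub>v w i \<in> cspan N ?K"
    proof (rule cvec.mult_mat_vec_in_span[OF V_carrier _ K _ w])
      fix x assume "x \<in> krylov ` {0..<i}"
      then obtain j where "j < i" "x = krylov j" by auto
      then have "V *\<^sub>v x \<in> ?K" by (auto intro!: image_eqI[of _ _ "Suc j"])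
      then show "V *\<^sub>v x \<in> cspan N ?K" using cvec.in_own_span[OF K] by blast
    qed auto
    then show ?thesis
      unfolding q_Suc_eq[OF i(1)] using IH K
      by (intro cvec.smult_in_span cvec.span_add1) auto
  qed
  with IH show ?case by (auto simp: atMost_Suc)
qed

lemma krylov_in_span_q:
  "j < n \<Longrightarrow> krylov j \<in> cspan N (q ` {1..j + 1})"
proof (induction j)
  case 0
  have "complex_of_real (vnorm2 b) \<cdot>\<^sub>v q 1 = b"
    unfolding q_1 using b vnorm2_eq_0_iff[OF b] b_nonzero by (intro eq_vecI) auto
  moreover have "complex_of_real (vnorm2 b) \<cdot>\<^sub>v q 1 \<in> cspan N {q 1}"
    using cvec.in_own_span[of "{q 1}"] by (intro cvec.smult_in_span) auto
  ultimately show ?case by simp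
next
  case (Suc j)
  let ?S = "q ` {1..Suc j + 1}"
  have S: "?S \<subseteq> carrier_vec N" by auto
  have "V *\<^sub>v q i \<in> cspan N ?S" if "i \<in> {1..j + 1}" for i
  proof -
    have "V *\<^sub>v q i \<in> cspan N (q ` {1..i + 1})"
      using V_q_in_span that Suc.prems by simp
    also have "cspan N (q ` {1..i + 1}) \<subseteq> cspan N ?S"
      using that by (intro cvec.span_is_monotone) auto
    finally show ?thesis .
  qed
  then have "V *\<^sub>v krylov j \<in> cspan N ?S"
    using Suc.prems by (intro cvec.mult_mat_vec_in_span[OF V_carrier _ S _ Suc.IH]) auto
  then show ?case by simp
qed

lemma span_q_eq_span_krylov:
  assumes "k \<le> n"
  shows "cspan N (q ` {1..k}) = cspan N (krylov ` {0..<k})"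
proof
  show "cspan N (q ` {1..k}) \<subseteq> cspan N (krylov ` {0..<k})"
    using q_in_span_krylov[of k] assms by (intro cvec.span_subsetI) auto
  have "krylov j \<in> cspan N (q ` {1..k})" if "j < k" for j
  proof -
    have "cspan N (q ` {1..j + 1}) \<subseteq> cspan N (q ` {1..k})"
      using that by (intro cvec.span_is_monotone) auto
    then show ?thesis using krylov_in_span_q[of j] that assms by auto
  qed
  then show "cspan N (krylov ` {0..<k}) \<subseteq> cspan N (q ` {1..k})"
    by (intro cvec.span_subsetI) auto
qed

section \<open>Matrix form of the recurrence\<close>

lemma V_Q_index: "r < N \<Longrightarrow> c < k \<Longrightarrow> (V * arn_Q N V b k) $$ (r, c) = (V *\<^sub>v q (Suc c)) $ r"
  using V_carrier arn_Q_carrier[of N V b k] by (simp add: col_arn_Q)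

lemma V_Q_U_eq_Q_Lhat:
  assumes "k \<le> n"
  shows "V * arn_Q N V b k * arn_U V b k = arn_Q N V b (k + 1) * arn_Lhat V b k"
    (is "?VQU = ?QLhat")
proof (rule eq_matI)
  fix r c assume "r < dim_row ?QLhat" "c < dim_col ?QLhat"
  then have r: "r < N" and c: "c < k"
    using arn_Q_carrier arn_Lhat_carrier by (metis carrier_matD index_mult_mat(2,3))+
  have VQ: "V * arn_Q N V b k \<in> carrier_mat N k"
    by (rule mult_carrier_mat[OF V_carrier arn_Q_carrier])
  have "?VQU $$ (r, c) = (V *\<^sub>v q (Suc c)) $ r + (if 0 < c then u (c + 1) * (V *\<^sub>v q c) $ r else 0)"
    using index_mult_mat_sum[OF VQ arn_U_carrier r c] r c
    by (simp add: V_Q_index arn_U_def sum_mult_upper_bidiagonal)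
  also have "\<dots> = (V *\<^sub>v w (Suc c)) $ r"
    using V_w_index[OF r] u_1 by (cases c) auto
  also have "\<dots> = (l (Suc c) \<cdot>\<^sub>v q (Suc c) + complex_of_real (s (Suc c)) \<cdot>\<^sub>v q (Suc (Suc c))) $ r"
    using arnoldi_recurrence[of "Suc c"] c assms by simp
  also have "\<dots> = ?QLhat $$ (r, c)"
    using index_mult_mat_sum[OF arn_Q_carrier arn_Lhat_carrier r c] r c
    by (simp add: arn_Q_index arn_Lhat_def sum_mult_lower_bidiagonal mult.commute del: sum.lessThan_Suc)
  finally show "?VQU $$ (r, c) = ?QLhat $$ (r, c)" .
qed (use V_carrier arn_Q_carrier[of N V b k] arn_Q_carrier[of N V b "k + 1"] arn_U_carrier[of V b k]
      arn_Lhat_carrier[of V b k] in auto)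

lemma mat_adjoint_Q_mult_Q: "k \<le> n \<Longrightarrow> mat_adjoint (arn_Q N V b (k + 1)) * arn_Q N V b (k + 1) = 1\<^sub>m (k + 1)"
  by (rule mat_adjoint_mult_self_eq_oneI[OF arn_Q_carrier]) (simp add: col_arn_Q q_orthonormal)

lemma Lhat_mult_U_inverse_orthonormal:
  assumes k: "k \<le> n" and W: "W \<in> carrier_mat k k" and inverse: "arn_U V b k * W = 1\<^sub>m k"
  shows "mat_adjoint (arn_Lhat V b k * W) * (arn_Lhat V b k * W) = 1\<^sub>m k"
proof -
  let ?Q = "arn_Q N V b (k + 1)" and ?M = "arn_Lhat V b k * W"
  have M: "?M \<in> carrier_mat (k + 1) k"
    by (rule mult_carrier_mat[OF arn_Lhat_carrier W])
  have "?Q * ?M = ?Q * arn_Lhat V b k * W"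
    by (rule assoc_mult_mat[OF arn_Q_carrier arn_Lhat_carrier W, symmetric])
  also have "\<dots> = V * arn_Q N V b k * (arn_U V b k * W)"
    unfolding V_Q_U_eq_Q_Lhat[OF k, symmetric]
    by (rule assoc_mult_mat[OF mult_carrier_mat[OF V_carrier arn_Q_carrier] arn_U_carrier W])
  finally have QM: "?Q * ?M = V * arn_Q N V b k"
    using V_carrier arn_Q_carrier[of N V b k] inverse by simp
  show ?thesis
  proof (rule mat_adjoint_mult_self_eq_oneI[OF M])
    fix i j assume i: "i < k" and j: "j < k"
    have Q_col: "?Q *\<^sub>v col ?M t = V *\<^sub>v q (Suc t)" if t: "t < k" for t
    proof -
      have "?Q *\<^sub>v col ?M t = col (V * arn_Q N V b k) t"
        unfolding QM[symmetric] by (rule col_mult2[OF arn_Q_carrier M t, symmetric])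
      also have "\<dots> = V *\<^sub>v q (Suc t)"
        using col_mult2[OF V_carrier arn_Q_carrier t] t by (simp add: col_arn_Q)
      finally show ?thesis .
    qed
    have "col ?M j \<bullet>c col ?M i = (?Q *\<^sub>v col ?M j) \<bullet>c (?Q *\<^sub>v col ?M i)"
      using isometry_cscalar_prod[OF arn_Q_carrier mat_adjoint_Q_mult_Q[OF k]] M i j by simp
    also have "\<dots> = q (Suc j) \<bullet>c q (Suc i)"
      unfolding Q_col[OF i] Q_col[OF j] by (simp add: V_isometry)
    finally show "col ?M j \<bullet>c col ?M i = (if i = j then 1 else 0)"
      using q_orthonormal i j k by simp
  qed
qed

end

theorem proposition2:
  fixes N n :: nat and V :: "complex mat" and b :: "complex vec"
  assumes unitary: "unitary_mat N V"
    and b: "b \<in> carrier_vec N" and b_nz: "b \<noteq> 0\<^sub>v N"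
    and no_breakdown: "\<And>k. 1 \<le> k \<Longrightarrow> k \<le> n \<Longrightarrow>
        arn_ls V b k \<noteq> 0 \<and>
        (k > 1 \<longrightarrow> arn_v V b (k - 1) \<bullet>c arn_q V b (k - 1) \<noteq> 0)"
  shows "\<forall>k. 1 \<le> k \<and> k \<le> n \<longrightarrow>
     (\<forall>i\<in>{1..k+1}. \<forall>j\<in>{1..k+1}.
         arn_q V b i \<bullet>c arn_q V b j = (if i = j then 1 else 0))
   \<and> cspan N (arn_q V b ` {1..k}) = cspan N ((\<lambda>j. ((\<lambda>x. V *\<^sub>v x) ^^ j) b) ` {0..<k})
   \<and> V * arn_Q N V b k * arn_U V b k
       = arn_Q N V b k * arn_L V b k
         + complex_of_real (arn_ls V b k) \<cdot>\<^sub>m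
             (mat_of_cols N [arn_q V b (k + 1)] * mat_of_rows k [unit_vec k (k - 1)])
   \<and> arn_Q N V b k * arn_L V b k
         + complex_of_real (arn_ls V b k) \<cdot>\<^sub>m
             (mat_of_cols N [arn_q V b (k + 1)] * mat_of_rows k [unit_vec k (k - 1)])
       = arn_Q N V b (k + 1) * arn_Lhat V b k
   \<and> invertible_mat (arn_U V b k)
   \<and> (\<forall>W \<in> carrier_mat k k. inverts_mat (arn_U V b k) W \<longrightarrow>
        mat_adjoint (arn_Lhat V b k * W) * (arn_Lhat V b k * W) = 1\<^sub>m k)"
proof -
  interpret unitary_arnoldi N n V b
    using assms by unfold_locales
  have U_inverse: "arn_U V b k * W = 1\<^sub>m k" if "inverts_mat (arn_U V b k) W" for k W
    using that arn_U_carrier[of V b k] unfolding inverts_mat_def by simp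
  show ?thesis
    using q_orthonormal span_q_eq_span_krylov V_Q_U_eq_Q_Lhat
      arn_Q_mult_L_plus_last_column[OF _ q_carrier] arn_U_invertible
      Lhat_mult_U_inverse_orthonormal[OF _ _ U_inverse]
    by auto
qed

end
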